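(* Let $G$ be a group acting on the left by isometries on a geodesic semimetric space $X$ which has a basepoint. Suppose that the action is cocompact and that it is outward proper or inward proper. Then $G$ is finitely generated, and $G$, equipped with the word metric with respect to a finite generating set, is quasi-isometric to $X$. In particular, $X$ is a quasi-metric space.
   Context: Let $\mathbb{R}^\infty=\mathbb{R}^{\ge 0}\cup\{\infty\}$ with the usual order extended so that $\infty$ is largest, and $\infty+x=x+\infty=\infty$, $y\infty=\infty y=\infty$ for $y>0$. A semimetric space is a set $X$ with $d:X\times X\to\mathbb{R}^\infty$ such that $d(x,y)=0$ iff $x=y$, and $d(x,z)\le d(x,y)+d(y,z)$ (no symmetry required). A basepoint is $x_0\in X$ with $d(x_0,y)\neq\infty$ for all $y$; $X$ is strongly connected if every point is a basepoint. A path of length $n\ge 0$ from $x$ to $y$ is a map $p:[0,n]\to X$ with $p(0)=x$, $p(n)=y$, $d(p(a),p(b))\le b-a$ for $0\le a\le b\le n$; a geodesic from $x$ to $y$ (when $d(x,y)<\infty$) is a path of length $d(x,y)$; $X$ is geodesic if a geodesic exists between every $x,y$ with $d(x,y)<\infty$. An action by isometries means each $g\in G$ acts by a distance-preserving bijection. For $A,B\subseteq X$, $d(A,B)=\inf_{a\in A,b\in B}d(a,b)$. Out-ball: $\overrightarrow{\mathcal{B}}_r(x_0)=\{y: d(x_0,y)\le r\}$; in-ball: $\overleftarrow{\mathcal{B}}_r(x_0)=\{y: d(y,x_0)\le r\}$; strong ball $\mathcal{B}_r(x_0)=\overrightarrow{\mathcal{B}}_r(x_0)\cap\overleftarrow{\mathcal{B}}_r(x_0)$.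 The action is cocompact if some strong ball $B$ of finite radius has $\{gB:g\in G\}$ covering $X$. It is outward proper if for every out-ball $B$ of finite radius the set $\{g\in G: B\cap gB\neq\varnothing\}$ is finite; inward proper is the same with in-balls. A subset $T\subseteq X$ is $\mu$-quasi-dense if for every $x\in X$ there is $y\in T$ with $\max(d(x,y),d(y,x))\le\mu$. A map $f:X\to X'$ of semimetric spaces is a $(\lambda,\epsilon)$-quasi-isometric embedding ($1\le\lambda<\infty$, $0<\epsilon<\infty$) if $\frac1\lambda d(x,y)-\epsilon\le d'(f(x),f(y))\le\lambda d(x,y)+\epsilon$ for all $x,y$; it is a quasi-isometry if moreover $f(X)$ is $\mu$-quasi-dense for some finite $\mu\ge 0$; spaces are quasi-isometric if such a map exists. A semimetric space is quasi-metric if it is strongly connected and there are $1\le\lambda<\infty$, $0\le\epsilon<\infty$ with $d(y,x)\le\lambda d(x,y)+\epsilon$ for all $x,y$. For a group $G$ and a finite subset $S$ generating $G$ as a monoid, the word metric is $d_S(g,h)=\min\{n: h=gs_1\cdots s_n,\ s_i\in S\}$. *)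

theory Defs
  imports "HOL-Analysis.Analysis" "HOL-Algebra.Group_Action" "HOL-Library.Extended_Nonnegative_Real"
begin

definition semimetric :: "'a set \<Rightarrow> ('a \<Rightarrow> 'a \<Rightarrow> ennreal) \<Rightarrow> bool" where
  "semimetric X d \<longleftrightarrow>
     (\<forall>x\<in>X. \<forall>y\<in>X. d x y = 0 \<longleftrightarrow> x = y) \<and>
     (\<forall>x\<in>X. \<forall>y\<in>X. \<forall>z\<in>X. d x z \<le> d x y + d y z)"

definition is_basepoint :: "'a set \<Rightarrow> ('a \<Rightarrow> 'a \<Rightarrow> ennreal) \<Rightarrow> 'a \<Rightarrow> bool" where
  "is_basepoint X d x0 \<longleftrightarrow> x0 \<in> X \<and> (\<forall>y\<in>X. d x0 y \<noteq> \<infinity>)"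

definition has_basepoint :: "'a set \<Rightarrow> ('a \<Rightarrow> 'a \<Rightarrow> ennreal) \<Rightarrow> bool" where
  "has_basepoint X d \<longleftrightarrow> (\<exists>x0. is_basepoint X d x0)"

definition strongly_connected :: "'a set \<Rightarrow> ('a \<Rightarrow> 'a \<Rightarrow> ennreal) \<Rightarrow> bool" where
  "strongly_connected X d \<longleftrightarrow> (\<forall>x\<in>X. is_basepoint X d x)"

definition is_path :: "'a set \<Rightarrow> ('a \<Rightarrow> 'a \<Rightarrow> ennreal) \<Rightarrow> (real \<Rightarrow> 'a) \<Rightarrow> real \<Rightarrow> 'a \<Rightarrow> 'a \<Rightarrow> bool" where
  "is_path X d p n x y \<longleftrightarrow> 0 \<le> n \<and> p ` {0..n} \<subseteq> X \<and> p 0 = x \<and> p n = y \<and>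
     (\<forall>a b. 0 \<le> a \<longrightarrow> a \<le> b \<longrightarrow> b \<le> n \<longrightarrow> d (p a) (p b) \<le> ennreal (b - a))"

definition geodesic_semimetric :: "'a set \<Rightarrow> ('a \<Rightarrow> 'a \<Rightarrow> ennreal) \<Rightarrow> bool" where
  "geodesic_semimetric X d \<longleftrightarrow>
     (\<forall>x\<in>X. \<forall>y\<in>X. d x y \<noteq> \<infinity> \<longrightarrow> (\<exists>p. is_path X d p (enn2real (d x y)) x y))"

definition out_ball :: "'a set \<Rightarrow> ('a \<Rightarrow> 'a \<Rightarrow> ennreal) \<Rightarrow> real \<Rightarrow> 'a \<Rightarrow> 'a set" where
  "out_ball X d r x0 = {y\<in>X. d x0 y \<le> ennreal r}"

definition in_ball :: "'a set \<Rightarrow> ('a \<Rightarrow> 'a \<Rightarrow> ennreal) \<Rightarrow> real \<Rightarrow> 'a \<Rightarrow> 'a set" where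
  "in_ball X d r x0 = {y\<in>X. d y x0 \<le> ennreal r}"

definition strong_ball :: "'a set \<Rightarrow> ('a \<Rightarrow> 'a \<Rightarrow> ennreal) \<Rightarrow> real \<Rightarrow> 'a \<Rightarrow> 'a set" where
  "strong_ball X d r x0 = out_ball X d r x0 \<inter> in_ball X d r x0"

definition isometric_action :: "('g, 'm) monoid_scheme \<Rightarrow> 'a set \<Rightarrow> ('a \<Rightarrow> 'a \<Rightarrow> ennreal) \<Rightarrow> ('g \<Rightarrow> 'a \<Rightarrow> 'a) \<Rightarrow> bool" where
  "isometric_action G X d \<phi> \<longleftrightarrow> group_action G X \<phi> \<and>
     (\<forall>g\<in>carrier G. \<forall>x\<in>X. \<forall>y\<in>X. d (\<phi> g x) (\<phi> g y) = d x y)"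

definition cocompact_action :: "('g, 'm) monoid_scheme \<Rightarrow> 'a set \<Rightarrow> ('a \<Rightarrow> 'a \<Rightarrow> ennreal) \<Rightarrow> ('g \<Rightarrow> 'a \<Rightarrow> 'a) \<Rightarrow> bool" where
  "cocompact_action G X d \<phi> \<longleftrightarrow>
     (\<exists>x0\<in>X. \<exists>r\<ge>0. X = (\<Union>g\<in>carrier G. \<phi> g ` strong_ball X d r x0))"

definition outward_proper :: "('g, 'm) monoid_scheme \<Rightarrow> 'a set \<Rightarrow> ('a \<Rightarrow> 'a \<Rightarrow> ennreal) \<Rightarrow> ('g \<Rightarrow> 'a \<Rightarrow> 'a) \<Rightarrow> bool" where
  "outward_proper G X d \<phi> \<longleftrightarrow>
     (\<forall>x0\<in>X. \<forall>r\<ge>0. finite {g\<in>carrier G. out_ball X d r x0 \<inter> \<phi> g ` out_ball X d r x0 \<noteq> {}})"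

definition inward_proper :: "('g, 'm) monoid_scheme \<Rightarrow> 'a set \<Rightarrow> ('a \<Rightarrow> 'a \<Rightarrow> ennreal) \<Rightarrow> ('g \<Rightarrow> 'a \<Rightarrow> 'a) \<Rightarrow> bool" where
  "inward_proper G X d \<phi> \<longleftrightarrow>
     (\<forall>x0\<in>X. \<forall>r\<ge>0. finite {g\<in>carrier G. in_ball X d r x0 \<inter> \<phi> g ` in_ball X d r x0 \<noteq> {}})"

definition quasi_dense :: "'a set \<Rightarrow> ('a \<Rightarrow> 'a \<Rightarrow> ennreal) \<Rightarrow> real \<Rightarrow> 'a set \<Rightarrow> bool" where
  "quasi_dense X d mu T \<longleftrightarrow>
     (\<forall>x\<in>X. \<exists>y\<in>T. max (d x y) (d y x) \<le> ennreal mu)"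

text \<open>(lambda, epsilon)-quasi-isometric embedding; the lower bound
  (1/lambda) d - eps <= d' is written equivalently as (1/lambda) d <= d' + eps,
  which avoids truncated subtraction in ennreal.\<close>
definition qi_embedding :: "'a set \<Rightarrow> ('a \<Rightarrow> 'a \<Rightarrow> ennreal) \<Rightarrow> 'b set \<Rightarrow> ('b \<Rightarrow> 'b \<Rightarrow> ennreal)
    \<Rightarrow> ('a \<Rightarrow> 'b) \<Rightarrow> real \<Rightarrow> real \<Rightarrow> bool" where
  "qi_embedding X d X' d' f lam eps \<longleftrightarrow> 1 \<le> lam \<and> 0 < eps \<and> f ` X \<subseteq> X' \<and>
     (\<forall>x\<in>X. \<forall>y\<in>X. ennreal (1 / lam) * d x y \<le> d' (f x) (f y) + ennreal eps \<and>
                     d' (f x) (f y) \<le> ennreal lam * d x y + ennreal eps)"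

definition quasi_isometry :: "'a set \<Rightarrow> ('a \<Rightarrow> 'a \<Rightarrow> ennreal) \<Rightarrow> 'b set \<Rightarrow> ('b \<Rightarrow> 'b \<Rightarrow> ennreal)
    \<Rightarrow> ('a \<Rightarrow> 'b) \<Rightarrow> bool" where
  "quasi_isometry X d X' d' f \<longleftrightarrow>
     (\<exists>lam eps mu. qi_embedding X d X' d' f lam eps \<and> 0 \<le> mu \<and> quasi_dense X' d' mu (f ` X))"

definition quasi_isometric :: "'a set \<Rightarrow> ('a \<Rightarrow> 'a \<Rightarrow> ennreal) \<Rightarrow> 'b set \<Rightarrow> ('b \<Rightarrow> 'b \<Rightarrow> ennreal) \<Rightarrow> bool" where
  "quasi_isometric X d X' d' \<longleftrightarrow> (\<exists>f. quasi_isometry X d X' d' f)"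

definition quasi_metric :: "'a set \<Rightarrow> ('a \<Rightarrow> 'a \<Rightarrow> ennreal) \<Rightarrow> bool" where
  "quasi_metric X d \<longleftrightarrow> semimetric X d \<and> strongly_connected X d \<and>
     (\<exists>lam eps. 1 \<le> lam \<and> 0 \<le> eps \<and>
        (\<forall>x\<in>X. \<forall>y\<in>X. d y x \<le> ennreal lam * d x y + ennreal eps))"

definition word_prod :: "('g, 'm) monoid_scheme \<Rightarrow> 'g list \<Rightarrow> 'g" where
  "word_prod G ss = foldr (\<lambda>s acc. s \<otimes>\<^bsub>G\<^esub> acc) ss \<one>\<^bsub>G\<^esub>"

definition generates_monoid :: "('g, 'm) monoid_scheme \<Rightarrow> 'g set \<Rightarrow> bool" where
  "generates_monoid G S \<longleftrightarrow> S \<subseteq> carrier G \<and>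
     (\<forall>g\<in>carrier G. \<exists>ss. set ss \<subseteq> S \<and> g = word_prod G ss)"

definition word_metric :: "('g, 'm) monoid_scheme \<Rightarrow> 'g set \<Rightarrow> 'g \<Rightarrow> 'g \<Rightarrow> ennreal" where
  "word_metric G S g h =
     (if \<exists>ss. set ss \<subseteq> S \<and> h = g \<otimes>\<^bsub>G\<^esub> word_prod G ss
      then of_nat (LEAST n. \<exists>ss. length ss = n \<and> set ss \<subseteq> S \<and> h = g \<otimes>\<^bsub>G\<^esub> word_prod G ss)
      else \<infinity>)"

end

theory Submission
  imports Defs
begin

text \<open>The Milnor--Schwarz argument. Fix the centre c and radius r of a strong ball whose
  translates cover X; with one basepoint this makes d finite everywhere. Cutting a geodesic
  from a c to b c into unit pieces and moving each cut point to a nearby orbit point writes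
  a\<inverse>b as a word of length at most d(a c, b c) + 2 in the elements that move c by at most
  2r + 1. These elements are finite in number by properness, so they form a finite generating
  set for which the orbit map g \<mapsto> g c is a quasi-isometry; any other finite generating set
  rewrites them with bounded loss. Bounding the reverse distance along the same word, letter
  by letter, gives d(b c, a c) \<le> K (d(a c, b c) + 2) for a constant K, whence the quasi-metric inequality.\<close>

lemma ennreal_le_not_infinity: "(a::ennreal) \<le> ennreal r \<Longrightarrow> a \<noteq> \<infinity>"
  by (metis ennreal_neq_top neq_top_trans infinity_ennreal_def)

lemma ennreal_le_add_not_infinity:
  "(x::ennreal) \<le> a + b \<Longrightarrow> a \<noteq> \<infinity> \<Longrightarrow> b \<noteq> \<infinity> \<Longrightarrow> x \<noteq> \<infinity>"
  by (metis ennreal_add_eq_top neq_top_trans infinity_ennreal_def)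

lemma ennreal_le_affine:
  assumes "0 \<le> a" "0 \<le> t" "0 \<le> b" "u \<le> a * t + b"
  shows "ennreal u \<le> ennreal a * ennreal t + ennreal b"
proof -
  have "ennreal u \<le> ennreal (a * t + b)"
    using assms(4) by (rule ennreal_leI)
  then show ?thesis
    using assms(1-3) by (simp add: ennreal_plus ennreal_mult)
qed

lemma ennreal_affine_le:
  assumes "0 \<le> a" "0 \<le> t" "0 \<le> u" "0 \<le> b" "a * t \<le> u + b"
  shows "ennreal a * ennreal t \<le> ennreal u + ennreal b"
proof -
  have "ennreal (a * t) \<le> ennreal (u + b)"
    using assms(5) by (rule ennreal_leI)
  then show ?thesis
    using assms(1-4) by (simp add: ennreal_plus ennreal_mult)
qed

lemma word_prod_Nil [simp]: "word_prod G [] = \<one>\<^bsub>G\<^esub>"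
  by (simp add: word_prod_def)

lemma word_prod_Cons [simp]: "word_prod G (s # ss) = s \<otimes>\<^bsub>G\<^esub> word_prod G ss"
  by (simp add: word_prod_def)

lemma (in group) m_inv_cancel_left: "a \<in> carrier G \<Longrightarrow> b \<in> carrier G \<Longrightarrow> a \<otimes> (inv a \<otimes> b) = b"
  by (simp add: m_assoc[symmetric])

lemma (in group) word_prod_closed: "set ss \<subseteq> carrier G \<Longrightarrow> word_prod G ss \<in> carrier G"
  by (induction ss) auto

lemma (in group) word_prod_append:
  "set xs \<subseteq> carrier G \<Longrightarrow> set ys \<subseteq> carrier G \<Longrightarrow>
   word_prod G (xs @ ys) = word_prod G xs \<otimes> word_prod G ys"
  by (induction xs) (auto simp: m_assoc word_prod_closed)

lemma (in group) generates_monoid_rewrite_words: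
  assumes S: "generates_monoid G S" and T: "finite T" "T \<subseteq> carrier G"
  obtains M :: nat where "\<And>ts. set ts \<subseteq> T \<Longrightarrow>
    \<exists>us. set us \<subseteq> S \<and> word_prod G us = word_prod G ts \<and> length us \<le> M * length ts"
proof -
  have "\<forall>t\<in>T. \<exists>ws. set ws \<subseteq> S \<and> t = word_prod G ws"
    using S T(2) unfolding generates_monoid_def by blast
  then obtain ws where ws: "\<And>t. t \<in> T \<Longrightarrow> set (ws t) \<subseteq> S \<and> t = word_prod G (ws t)"
    by metis
  define M where "M = (\<Sum>t\<in>T. length (ws t))"
  have M: "length (ws t) \<le> M" if "t \<in> T" for t
    unfolding M_def using that T(1) by (intro member_le_sum) auto
  have SG: "S \<subseteq> carrier G"
    using S by (simp add: generates_monoid_def)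
  have "set (concat (map ws ts)) \<subseteq> S \<and> word_prod G (concat (map ws ts)) = word_prod G ts
      \<and> length (concat (map ws ts)) \<le> M * length ts" if "set ts \<subseteq> T" for ts
    using that
  proof (induction ts)
    case (Cons t ts)
    then have "set (ws t) \<subseteq> carrier G" "set (concat (map ws ts)) \<subseteq> carrier G"
      using ws SG by auto
    with Cons ws[of t] M[of t] show ?case
      by (auto simp: word_prod_append)
  qed simp
  then show thesis
    using that by blast
qed

lemma word_metric_le:
  "set ss \<subseteq> S \<Longrightarrow> h = g \<otimes>\<^bsub>G\<^esub> word_prod G ss \<Longrightarrow> word_metric G S g h \<le> of_nat (length ss)"
  unfolding word_metric_def by (auto intro!: Least_le)

lemma (in group) word_metric_attained:
  assumes "generates_monoid G S" "g \<in> carrier G" "h \<in> carrier G"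
  obtains ss where "set ss \<subseteq> S" "h = g \<otimes> word_prod G ss"
    "word_metric G S g h = of_nat (length ss)"
proof -
  obtain ss0 where ss0: "set ss0 \<subseteq> S" "inv g \<otimes> h = word_prod G ss0"
    using assms unfolding generates_monoid_def by (metis inv_closed m_closed)
  have "h = g \<otimes> (inv g \<otimes> h)"
    using assms by (simp add: m_inv_cancel_left)
  then have ex: "\<exists>ss. set ss \<subseteq> S \<and> h = g \<otimes> word_prod G ss"
    using ss0 by metis
  let ?P = "\<lambda>n. \<exists>ss. length ss = n \<and> set ss \<subseteq> S \<and> h = g \<otimes> word_prod G ss"
  have "?P (LEAST n. ?P n)"
    by (rule LeastI_ex) (use ex in blast)
  then obtain ss where "length ss = (LEAST n. ?P n)" "set ss \<subseteq> S" "h = g \<otimes> word_prod G ss"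
    by blast
  then show thesis
    using that ex by (simp add: word_metric_def)
qed

lemma (in group_action) orbit_sym:
  "g \<in> carrier G \<Longrightarrow> y \<in> E \<Longrightarrow> \<phi> g (\<phi> (inv\<^bsub>G\<^esub> g) y) = y"
  using orbit_sym_aux[of "inv\<^bsub>G\<^esub> g" y] group_hom group_hom.axioms(1) element_image
  by (metis group.inv_closed group.inv_inv)

text \<open>Stated for an arbitrary invariant F so that it applies both to \<open>\<delta>\<close> and to its transpose.\<close>
lemma (in group_action) orbit_word_bound:
  fixes F :: "_ \<Rightarrow> _ \<Rightarrow> real" and K :: real
  assumes triangle: "\<And>x y z. x \<in> E \<Longrightarrow> y \<in> E \<Longrightarrow> z \<in> E \<Longrightarrow> F x z \<le> F x y + F y z"
    and invariant: "\<And>g x y. g \<in> carrier G \<Longrightarrow> x \<in> E \<Longrightarrow> y \<in> E \<Longrightarrow> F (\<phi> g x) (\<phi> g y) = F x y"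
    and refl: "\<And>x. x \<in> E \<Longrightarrow> F x x = 0"
    and x: "x \<in> E" and g: "g \<in> carrier G" and ss: "set ss \<subseteq> carrier G"
    and K: "\<And>s. s \<in> set ss \<Longrightarrow> F x (\<phi> s x) \<le> K"
  shows "F (\<phi> g x) (\<phi> (g \<otimes> word_prod G ss) x) \<le> length ss * K"
proof -
  interpret group G
    using group_hom group_hom.axioms(1) by auto
  show ?thesis
    using g ss K
  proof (induction ss arbitrary: g)
    case Nil
    then show ?case
      using refl element_image x by simp
  next
    case (Cons s ss)
    have s: "s \<in> carrier G" and ss: "set ss \<subseteq> carrier G" and gs: "g \<otimes> s \<in> carrier G"
      using Cons.prems by auto
    have "g \<otimes> word_prod G (s # ss) = (g \<otimes> s) \<otimes> word_prod G ss"
      using Cons.prems s ss by (simp add: m_assoc word_prod_closed)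
    moreover have "F (\<phi> g x) (\<phi> (g \<otimes> s) x) = F x (\<phi> s x)"
      using composition_rule[OF x Cons.prems(1) s] invariant[OF Cons.prems(1) x] element_image s x
      by simp
    moreover have "F (\<phi> g x) (\<phi> ((g \<otimes> s) \<otimes> word_prod G ss) x)
        \<le> F (\<phi> g x) (\<phi> (g \<otimes> s) x) + F (\<phi> (g \<otimes> s) x) (\<phi> ((g \<otimes> s) \<otimes> word_prod G ss) x)"
      using triangle element_image x Cons.prems(1) gs ss word_prod_closed by (meson m_closed)
    moreover have "F x (\<phi> s x) \<le> K"
      using Cons.prems(3) by simp
    moreover have "F (\<phi> (g \<otimes> s) x) (\<phi> ((g \<otimes> s) \<otimes> word_prod G ss) x) \<le> length ss * K"
      using Cons.IH[OF gs ss] Cons.prems(3) by simp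
    ultimately show ?case
      by (simp add: algebra_simps)
  qed
qed

locale cocompact_geodesic_action = group_action G X \<phi> for G (structure) and X and \<phi> +
  fixes d :: "'a \<Rightarrow> 'a \<Rightarrow> ennreal" and c :: 'a and r :: real
  assumes isometric: "\<And>g x y. g \<in> carrier G \<Longrightarrow> x \<in> X \<Longrightarrow> y \<in> X \<Longrightarrow> d (\<phi> g x) (\<phi> g y) = d x y"
    and semimetric: "semimetric X d"
    and geodesic: "geodesic_semimetric X d"
    and has_basepoint: "has_basepoint X d"
    and centre: "c \<in> X"
    and radius_nonneg: "0 \<le> r"
    and translates_cover: "X = (\<Union>g\<in>carrier G. \<phi> g ` strong_ball X d r c)"
begin

sublocale group G
  using group_hom group_hom.axioms(1) by auto

lemma orbit_closed: "g \<in> carrier G \<Longrightarrow> x \<in> X \<Longrightarrow> \<phi> g x \<in> X"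
  using element_image by blast

lemma orbit_point_closed: "g \<in> carrier G \<Longrightarrow> \<phi> g c \<in> X"
  by (rule orbit_closed[OF _ centre])

lemma d_triangle: "x \<in> X \<Longrightarrow> y \<in> X \<Longrightarrow> z \<in> X \<Longrightarrow> d x z \<le> d x y + d y z"
  using semimetric unfolding semimetric_def by blast

lemma d_self: "x \<in> X \<Longrightarrow> d x x = 0"
  using semimetric unfolding semimetric_def by blast

lemma near_orbit_point:
  assumes "x \<in> X"
  obtains g where "g \<in> carrier G" "d x (\<phi> g c) \<le> ennreal r" "d (\<phi> g c) x \<le> ennreal r"
proof -
  obtain g z where g: "g \<in> carrier G" and z: "z \<in> strong_ball X d r c" and x: "x = \<phi> g z"
    using assms translates_cover by blast
  then have "z \<in> X" "d c z \<le> ennreal r" "d z c \<le> ennreal r"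
    by (auto simp: strong_ball_def out_ball_def in_ball_def)
  then show thesis
    using that g isometric[OF g] centre x by auto
qed

text \<open>A single basepoint suffices: by cocompactness it transfers to c, by isometry to all of
  the orbit of c, and every point is within r of that orbit.\<close>
lemma d_finite:
  assumes x: "x \<in> X" and y: "y \<in> X"
  shows "d x y \<noteq> \<infinity>"
proof -
  obtain p where p: "p \<in> X" and p_finite: "\<And>y. y \<in> X \<Longrightarrow> d p y \<noteq> \<infinity>"
    using has_basepoint unfolding has_basepoint_def is_basepoint_def by blast
  obtain h where h: "h \<in> carrier G" "d (\<phi> h c) p \<le> ennreal r"
    using near_orbit_point[OF p] by blast
  have from_c: "d c z \<noteq> \<infinity>" if z: "z \<in> X" for z
  proof -
    have "d (\<phi> h c) (\<phi> h z) \<le> d (\<phi> h c) p + d p (\<phi> h z)"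
      using d_triangle orbit_closed h(1) z p centre by blast
    then have "d (\<phi> h c) (\<phi> h z) \<noteq> \<infinity>"
      using ennreal_le_add_not_infinity ennreal_le_not_infinity[OF h(2)]
        p_finite[OF orbit_closed[OF h(1) z]] by blast
    then show ?thesis
      using isometric[OF h(1) centre z] by simp
  qed
  obtain g where g: "g \<in> carrier G" "d x (\<phi> g c) \<le> ennreal r"
    using near_orbit_point[OF x] by blast
  have "d (\<phi> g c) y = d c (\<phi> (inv g) y)"
    using isometric[OF g(1) centre] orbit_sym[OF g(1) y] orbit_closed g(1) y
    by (metis inv_closed)
  then have "d (\<phi> g c) y \<noteq> \<infinity>"
    using from_c orbit_closed g(1) y by (metis inv_closed)
  moreover have "d x y \<le> d x (\<phi> g c) + d (\<phi> g c) y"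
    using d_triangle x y orbit_point_closed g(1) by blast
  ultimately show ?thesis
    using ennreal_le_add_not_infinity ennreal_le_not_infinity[OF g(2)] by blast
qed

definition \<delta> :: "'a \<Rightarrow> 'a \<Rightarrow> real" where
  "\<delta> x y = enn2real (d x y)"

lemma d_eq_\<delta>: "x \<in> X \<Longrightarrow> y \<in> X \<Longrightarrow> d x y = ennreal (\<delta> x y)"
  using d_finite unfolding \<delta>_def infinity_ennreal_def by (simp add: ennreal_enn2real_if)

lemma \<delta>_nonneg: "0 \<le> \<delta> x y"
  by (simp add: \<delta>_def)

lemma \<delta>_self: "x \<in> X \<Longrightarrow> \<delta> x x = 0"
  by (simp add: \<delta>_def d_self)

lemma \<delta>_triangle: "x \<in> X \<Longrightarrow> y \<in> X \<Longrightarrow> z \<in> X \<Longrightarrow> \<delta> x z \<le> \<delta> x y + \<delta> y z"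
  using d_triangle[of x y z] d_eq_\<delta> \<delta>_nonneg
  by (simp add: ennreal_plus[symmetric] del: ennreal_plus)

lemma \<delta>_isometric: "g \<in> carrier G \<Longrightarrow> x \<in> X \<Longrightarrow> y \<in> X \<Longrightarrow> \<delta> (\<phi> g x) (\<phi> g y) = \<delta> x y"
  by (simp add: \<delta>_def isometric)

lemma d_le_iff_\<delta>_le: "x \<in> X \<Longrightarrow> y \<in> X \<Longrightarrow> 0 \<le> a \<Longrightarrow> d x y \<le> ennreal a \<longleftrightarrow> \<delta> x y \<le> a"
  by (simp add: d_eq_\<delta> \<delta>_nonneg)

lemma near_orbit_point_\<delta>:
  assumes "x \<in> X"
  obtains g where "g \<in> carrier G" "\<delta> x (\<phi> g c) \<le> r" "\<delta> (\<phi> g c) x \<le> r"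
  using near_orbit_point[OF assms] d_le_iff_\<delta>_le assms orbit_point_closed radius_nonneg by metis

lemma \<delta>_orbit_points:
  assumes "a \<in> carrier G" "b \<in> carrier G"
  shows "\<delta> (\<phi> a c) (\<phi> b c) = \<delta> c (\<phi> (inv a \<otimes> b) c)"
proof -
  have "\<phi> b c = \<phi> (a \<otimes> (inv a \<otimes> b)) c"
    using m_inv_cancel_left assms by simp
  also have "\<dots> = \<phi> a (\<phi> (inv a \<otimes> b) c)"
    using composition_rule[OF centre assms(1)] assms by simp
  finally show ?thesis
    using \<delta>_isometric[OF assms(1) centre] orbit_point_closed assms by simp
qed

lemma geodesic_unit_step:
  assumes x: "x \<in> X" and y: "y \<in> X" and far: "1 < \<delta> x y"
  obtains z where "z \<in> X" "\<delta> x z \<le> 1" "\<delta> z y \<le> \<delta> x y - 1"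
proof -
  obtain p where "is_path X d p (\<delta> x y) x y"
    using geodesic d_finite[OF x y] x y unfolding geodesic_semimetric_def \<delta>_def by blast
  then have p: "p ` {0..\<delta> x y} \<subseteq> X" "p 0 = x" "p (\<delta> x y) = y"
    "\<And>a b. 0 \<le> a \<Longrightarrow> a \<le> b \<Longrightarrow> b \<le> \<delta> x y \<Longrightarrow> d (p a) (p b) \<le> ennreal (b - a)"
    unfolding is_path_def by auto
  have z: "p 1 \<in> X"
    using p(1) far by auto
  show thesis
  proof (rule that[OF z])
    show "\<delta> x (p 1) \<le> 1"
      using p(4)[of 0 1] p(2) far d_le_iff_\<delta>_le[OF x z, of 1] by simp
    show "\<delta> (p 1) y \<le> \<delta> x y - 1"
      using p(4)[of 1 "\<delta> x y"] p(3) far d_le_iff_\<delta>_le[OF z y] by simp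
  qed
qed

definition short_elements where
  "short_elements = {s \<in> carrier G. \<delta> c (\<phi> s c) \<le> 2 * r + 1}"

lemma short_elements_carrier: "short_elements \<subseteq> carrier G"
  by (auto simp: short_elements_def)

text \<open>The radius 2r + 1 accounts for one unit step along a geodesic from y to z, together with
  the distances r from a c to y and from z to b c.\<close>
lemma short_elementI:
  assumes a: "a \<in> carrier G" and b: "b \<in> carrier G" and y: "y \<in> X" and z: "z \<in> X"
    and "\<delta> (\<phi> a c) y \<le> r" "\<delta> y z \<le> 1" "\<delta> z (\<phi> b c) \<le> r"
  shows "inv a \<otimes> b \<in> short_elements"
proof -
  have "\<delta> (\<phi> a c) (\<phi> b c) \<le> \<delta> (\<phi> a c) y + \<delta> y z + \<delta> z (\<phi> b c)"
    using \<delta>_triangle[of "\<phi> a c" y "\<phi> b c"] \<delta>_triangle[of y z "\<phi> b c"] orbit_point_closed a b y z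
    by force
  then show ?thesis
    using assms by (simp add: short_elements_def \<delta>_orbit_points)
qed

lemma short_word_along_geodesic:
  assumes "a \<in> carrier G" "g \<in> carrier G" "y \<in> X" "\<delta> (\<phi> a c) y \<le> r" "\<delta> y (\<phi> g c) \<le> real n"
  shows "\<exists>ts. set ts \<subseteq> short_elements \<and> length ts \<le> n + 1 \<and> g = a \<otimes> word_prod G ts"
  using assms
proof (induction n arbitrary: a y)
  case 0
  then have "inv a \<otimes> g \<in> short_elements"
    using short_elementI[of a g y "\<phi> g c"] orbit_point_closed \<delta>_self radius_nonneg by simp
  then show ?case
    using 0 m_inv_cancel_left by (intro exI[of _ "[inv a \<otimes> g]"]) auto
next
  case (Suc n)
  show ?case
  proof (cases "\<delta> y (\<phi> g c) \<le> 1")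
    case True
    then have "inv a \<otimes> g \<in> short_elements"
      using Suc.prems short_elementI[of a g y "\<phi> g c"] orbit_point_closed \<delta>_self radius_nonneg
      by simp
    then show ?thesis
      using Suc.prems m_inv_cancel_left by (intro exI[of _ "[inv a \<otimes> g]"]) auto
  next
    case False
    then obtain z where z: "z \<in> X" "\<delta> y z \<le> 1" "\<delta> z (\<phi> g c) \<le> \<delta> y (\<phi> g c) - 1"
      using geodesic_unit_step Suc.prems orbit_point_closed by (metis not_le)
    obtain b where b: "b \<in> carrier G" "\<delta> z (\<phi> b c) \<le> r" "\<delta> (\<phi> b c) z \<le> r"
      using near_orbit_point_\<delta>[OF z(1)] by blast
    have s: "inv a \<otimes> b \<in> short_elements"
      using short_elementI[OF Suc.prems(1) b(1) Suc.prems(3) z(1)] Suc.prems z b by blast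
    obtain ts where ts: "set ts \<subseteq> short_elements" "length ts \<le> n + 1" "g = b \<otimes> word_prod G ts"
      using Suc.IH[OF b(1) Suc.prems(2) z(1) b(3)] z Suc.prems(5) by force
    have "g = a \<otimes> word_prod G ((inv a \<otimes> b) # ts)"
      using ts(3) m_inv_cancel_left[OF Suc.prems(1) b(1)] Suc.prems(1) b(1)
        word_prod_closed[of ts] short_elements_carrier ts(1)
      by (simp add: m_assoc[symmetric])
    then show ?thesis
      using s ts by (intro exI[of _ "(inv a \<otimes> b) # ts"]) auto
  qed
qed

lemma short_word_between_orbit_points:
  assumes a: "a \<in> carrier G" and b: "b \<in> carrier G"
  obtains ts where "set ts \<subseteq> short_elements" "b = a \<otimes> word_prod G ts"
    "real (length ts) \<le> \<delta> (\<phi> a c) (\<phi> b c) + 2"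
proof -
  define n where "n = nat \<lceil>\<delta> (\<phi> a c) (\<phi> b c)\<rceil>"
  have "\<delta> (\<phi> a c) (\<phi> b c) \<le> real n" "real n \<le> \<delta> (\<phi> a c) (\<phi> b c) + 1"
    unfolding n_def using \<delta>_nonneg[of "\<phi> a c" "\<phi> b c"] by linarith+
  moreover have "\<delta> (\<phi> a c) (\<phi> a c) \<le> r"
    using \<delta>_self orbit_point_closed a radius_nonneg by simp
  ultimately show thesis
    using short_word_along_geodesic[OF a b orbit_point_closed[OF a]] that by fastforce
qed

lemma short_elements_generate: "generates_monoid G short_elements"
  unfolding generates_monoid_def
proof (intro conjI ballI short_elements_carrier)
  fix g assume "g \<in> carrier G"
  then show "\<exists>ss. set ss \<subseteq> short_elements \<and> g = word_prod G ss"
    using short_word_between_orbit_points[OF one_closed] short_elements_carrier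
    by (metis l_one word_prod_closed subset_trans)
qed

lemma short_element_meets_out_ball:
  assumes "s \<in> short_elements"
  shows "out_ball X d (2 * r + 1) c \<inter> \<phi> s ` out_ball X d (2 * r + 1) c \<noteq> {}"
proof -
  have s: "s \<in> carrier G" "\<delta> c (\<phi> s c) \<le> 2 * r + 1"
    using assms by (auto simp: short_elements_def)
  then have "\<phi> s c \<in> out_ball X d (2 * r + 1) c"
    using d_le_iff_\<delta>_le[OF centre orbit_point_closed[OF s(1)], of "2 * r + 1"] radius_nonneg
      orbit_point_closed[OF s(1)]
    by (simp add: out_ball_def)
  moreover have "c \<in> out_ball X d (2 * r + 1) c"
    using centre d_self by (simp add: out_ball_def)
  ultimately show ?thesis
    by blast
qed

lemma short_element_meets_in_ball:
  assumes "s \<in> short_elements"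
  shows "in_ball X d (2 * r + 1) c \<inter> \<phi> s ` in_ball X d (2 * r + 1) c \<noteq> {}"
proof -
  have s: "s \<in> carrier G" "\<delta> c (\<phi> s c) \<le> 2 * r + 1"
    using assms by (auto simp: short_elements_def)
  have s_inv: "\<phi> s (\<phi> (inv s) c) = c"
    using orbit_sym s centre by blast
  have "\<delta> (\<phi> (inv s) c) c = \<delta> c (\<phi> s c)"
    using \<delta>_isometric[OF s(1) orbit_point_closed[OF inv_closed[OF s(1)]] centre] s_inv s(1) by simp
  then have "\<phi> (inv s) c \<in> in_ball X d (2 * r + 1) c"
    using d_le_iff_\<delta>_le[OF orbit_point_closed centre, of "inv s" "2 * r + 1"] s radius_nonneg
      orbit_point_closed[of "inv s"]
    by (simp add: in_ball_def)
  then have "c \<in> \<phi> s ` in_ball X d (2 * r + 1) c"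
    using s_inv by (metis imageI)
  moreover have "c \<in> in_ball X d (2 * r + 1) c"
    using centre d_self by (simp add: in_ball_def)
  ultimately show ?thesis
    by blast
qed

lemma short_elements_finite:
  assumes "outward_proper G X d \<phi> \<or> inward_proper G X d \<phi>"
  shows "finite short_elements"
  using assms
proof (elim disjE)
  assume "outward_proper G X d \<phi>"
  then have "finite {g \<in> carrier G. out_ball X d (2 * r + 1) c \<inter> \<phi> g ` out_ball X d (2 * r + 1) c \<noteq> {}}"
    using centre radius_nonneg unfolding outward_proper_def by simp
  then show ?thesis
    by (rule rev_finite_subset) (use short_elements_carrier short_element_meets_out_ball in blast)
next
  assume "inward_proper G X d \<phi>"
  then have "finite {g \<in> carrier G. in_ball X d (2 * r + 1) c \<inter> \<phi> g ` in_ball X d (2 * r + 1) c \<noteq> {}}"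
    using centre radius_nonneg unfolding inward_proper_def by simp
  then show ?thesis
    by (rule rev_finite_subset) (use short_elements_carrier short_element_meets_in_ball in blast)
qed

lemma orbit_map_upper_bound:
  assumes S: "finite S" "generates_monoid G S"
  obtains K where "0 \<le> K"
    "\<And>g h. g \<in> carrier G \<Longrightarrow> h \<in> carrier G \<Longrightarrow>
      d (\<phi> g c) (\<phi> h c) \<le> ennreal K * word_metric G S g h"
proof
  define K where "K = (\<Sum>s\<in>S. \<delta> c (\<phi> s c))"
  show K0: "0 \<le> K"
    unfolding K_def by (simp add: \<delta>_nonneg sum_nonneg)
  fix g h assume g: "g \<in> carrier G" and h: "h \<in> carrier G"
  obtain ss where ss: "set ss \<subseteq> S" "h = g \<otimes> word_prod G ss"
    and wm: "word_metric G S g h = of_nat (length ss)"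
    using word_metric_attained[OF S(2) g h] by blast
  have "set ss \<subseteq> carrier G"
    using ss(1) S(2) unfolding generates_monoid_def by blast
  moreover have "\<delta> c (\<phi> s c) \<le> K" if "s \<in> set ss" for s
    using that ss(1) S(1) unfolding K_def by (intro member_le_sum) (auto simp: \<delta>_nonneg)
  ultimately have "\<delta> (\<phi> g c) (\<phi> h c) \<le> length ss * K"
    using orbit_word_bound[of \<delta>, OF \<delta>_triangle \<delta>_isometric \<delta>_self centre g] ss(2) by simp
  then have "ennreal (\<delta> (\<phi> g c) (\<phi> h c)) \<le> ennreal K * ennreal (real (length ss))"
    using K0 by (subst ennreal_mult[symmetric]) (auto simp: mult.commute intro: ennreal_leI)
  then show "d (\<phi> g c) (\<phi> h c) \<le> ennreal K * word_metric G S g h"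
    using wm d_eq_\<delta> orbit_point_closed g h by (simp add: ennreal_of_nat_eq_real_of_nat)
qed

lemma orbit_map_lower_bound:
  assumes S: "generates_monoid G S" and finite: "finite short_elements"
  obtains M :: nat where "\<And>g h. g \<in> carrier G \<Longrightarrow> h \<in> carrier G \<Longrightarrow>
      word_metric G S g h \<le> of_nat M * (d (\<phi> g c) (\<phi> h c) + 2)"
proof -
  obtain M where M: "\<And>ts. set ts \<subseteq> short_elements \<Longrightarrow>
      \<exists>us. set us \<subseteq> S \<and> word_prod G us = word_prod G ts \<and> length us \<le> M * length ts"
    using generates_monoid_rewrite_words[OF S finite short_elements_carrier] by blast
  have "word_metric G S g h \<le> of_nat M * (d (\<phi> g c) (\<phi> h c) + 2)"
    if g: "g \<in> carrier G" and h: "h \<in> carrier G" for g h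
  proof -
    obtain ts where ts: "set ts \<subseteq> short_elements" "h = g \<otimes> word_prod G ts"
      "real (length ts) \<le> \<delta> (\<phi> g c) (\<phi> h c) + 2"
      using short_word_between_orbit_points[OF g h] by blast
    obtain us where us: "set us \<subseteq> S" "word_prod G us = word_prod G ts" "length us \<le> M * length ts"
      using M[OF ts(1)] by blast
    have "word_metric G S g h \<le> of_nat (length us)"
      using word_metric_le us ts(2) by metis
    also have "\<dots> \<le> ennreal (real M * (\<delta> (\<phi> g c) (\<phi> h c) + 2))"
    proof -
      have "real (length us) \<le> real M * real (length ts)"
        using us(3) by (metis of_nat_le_iff of_nat_mult)
      also have "\<dots> \<le> real M * (\<delta> (\<phi> g c) (\<phi> h c) + 2)"
        using ts(3) by (intro mult_left_mono) auto
      finally show ?thesis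
        by (simp add: ennreal_of_nat_eq_real_of_nat ennreal_leI)
    qed
    also have "\<dots> = of_nat M * (d (\<phi> g c) (\<phi> h c) + 2)"
      using d_eq_\<delta> orbit_point_closed g h \<delta>_nonneg
      by (simp add: ennreal_mult ennreal_plus ennreal_of_nat_eq_real_of_nat)
    finally show ?thesis .
  qed
  then show thesis
    using that by blast
qed

lemma orbit_quasi_dense: "quasi_dense X d r ((\<lambda>g. \<phi> g c) ` carrier G)"
  unfolding quasi_dense_def
proof
  fix x assume "x \<in> X"
  then obtain g where "g \<in> carrier G" "d x (\<phi> g c) \<le> ennreal r" "d (\<phi> g c) x \<le> ennreal r"
    by (rule near_orbit_point)
  then show "\<exists>y\<in>(\<lambda>g. \<phi> g c) ` carrier G. max (d x y) (d y x) \<le> ennreal r"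
    by auto
qed

lemma orbit_map_quasi_isometric:
  assumes S: "finite S" "generates_monoid G S" and finite: "finite short_elements"
  shows "quasi_isometric (carrier G) (word_metric G S) X d"
proof -
  obtain K where K: "0 \<le> K" "\<And>g h. g \<in> carrier G \<Longrightarrow> h \<in> carrier G \<Longrightarrow>
      d (\<phi> g c) (\<phi> h c) \<le> ennreal K * word_metric G S g h"
    using orbit_map_upper_bound[OF S] by blast
  obtain M where M: "\<And>g h. g \<in> carrier G \<Longrightarrow> h \<in> carrier G \<Longrightarrow>
      word_metric G S g h \<le> of_nat M * (d (\<phi> g c) (\<phi> h c) + 2)"
    using orbit_map_lower_bound[OF S(2) finite] by blast
  define lam where "lam = 1 + K + real M"
  have lam: "1 \<le> lam" "K \<le> lam" "real M \<le> lam"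
    using K(1) by (auto simp: lam_def)
  have "qi_embedding (carrier G) (word_metric G S) X d (\<lambda>g. \<phi> g c) lam 2"
    unfolding qi_embedding_def
  proof (intro conjI ballI)
    fix g h assume g: "g \<in> carrier G" and h: "h \<in> carrier G"
    have "ennreal K * word_metric G S g h \<le> ennreal lam * word_metric G S g h"
      using lam(2) by (intro mult_right_mono ennreal_leI) auto
    then show "d (\<phi> g c) (\<phi> h c) \<le> ennreal lam * word_metric G S g h + ennreal 2"
      using K(2)[OF g h] by (meson add_increasing2 order_trans zero_le)
    have "ennreal (1 / lam) * word_metric G S g h
        \<le> ennreal (1 / lam) * ennreal (real M * (\<delta> (\<phi> g c) (\<phi> h c) + 2))"
      using M[OF g h] d_eq_\<delta> orbit_point_closed g h \<delta>_nonneg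
      by (intro mult_left_mono) (simp_all add: ennreal_mult ennreal_plus ennreal_of_nat_eq_real_of_nat)
    also have "\<dots> \<le> ennreal (\<delta> (\<phi> g c) (\<phi> h c)) + ennreal 2"
    proof (rule ennreal_affine_le)
      have "real M / lam \<le> 1"
        using lam by simp
      then show "1 / lam * (real M * (\<delta> (\<phi> g c) (\<phi> h c) + 2)) \<le> \<delta> (\<phi> g c) (\<phi> h c) + 2"
        using mult_right_mono[of "real M / lam" 1 "\<delta> (\<phi> g c) (\<phi> h c) + 2"] \<delta>_nonneg by simp
    qed (use lam \<delta>_nonneg in auto)
    finally show "ennreal (1 / lam) * word_metric G S g h \<le> d (\<phi> g c) (\<phi> h c) + ennreal 2"
      using d_eq_\<delta> orbit_point_closed g h by simp
  qed (use lam orbit_point_closed in auto)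
  then show ?thesis
    unfolding quasi_isometric_def quasi_isometry_def using orbit_quasi_dense radius_nonneg by blast
qed

lemma orbit_points_reverse_bound:
  assumes finite: "finite short_elements"
  obtains K where "0 \<le> K" "\<And>g h. g \<in> carrier G \<Longrightarrow> h \<in> carrier G \<Longrightarrow>
      \<delta> (\<phi> h c) (\<phi> g c) \<le> K * (\<delta> (\<phi> g c) (\<phi> h c) + 2)"
proof
  define K where "K = (\<Sum>s\<in>short_elements. \<delta> (\<phi> s c) c)"
  show K0: "0 \<le> K"
    unfolding K_def by (simp add: \<delta>_nonneg sum_nonneg)
  fix g h assume g: "g \<in> carrier G" and h: "h \<in> carrier G"
  obtain ts where ts: "set ts \<subseteq> short_elements" "h = g \<otimes> word_prod G ts"
    "real (length ts) \<le> \<delta> (\<phi> g c) (\<phi> h c) + 2"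
    using short_word_between_orbit_points[OF g h] by blast
  have "set ts \<subseteq> carrier G"
    using ts(1) short_elements_carrier by blast
  moreover have "\<delta> (\<phi> s c) c \<le> K" if "s \<in> set ts" for s
    using that ts(1) finite unfolding K_def by (intro member_le_sum) (auto simp: \<delta>_nonneg)
  moreover have "\<delta> z x \<le> \<delta> y x + \<delta> z y" if "x \<in> X" "y \<in> X" "z \<in> X" for x y z
    using \<delta>_triangle[of z y x] that by simp
  ultimately have "\<delta> (\<phi> h c) (\<phi> g c) \<le> length ts * K"
    using orbit_word_bound[of "\<lambda>x y. \<delta> y x", OF _ \<delta>_isometric \<delta>_self centre g] ts(2) by simp
  also have "\<dots> \<le> K * (\<delta> (\<phi> g c) (\<phi> h c) + 2)"
    using ts(3) K0 by (simp add: mult.commute mult_left_mono)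
  finally show "\<delta> (\<phi> h c) (\<phi> g c) \<le> K * (\<delta> (\<phi> g c) (\<phi> h c) + 2)" .
qed

lemma reverse_distance_bound:
  assumes finite: "finite short_elements"
  shows "\<exists>lam eps. 1 \<le> lam \<and> 0 \<le> eps \<and> (\<forall>x\<in>X. \<forall>y\<in>X. d y x \<le> ennreal lam * d x y + ennreal eps)"
proof -
  obtain K where K: "0 \<le> K" "\<And>g h. g \<in> carrier G \<Longrightarrow> h \<in> carrier G \<Longrightarrow>
      \<delta> (\<phi> h c) (\<phi> g c) \<le> K * (\<delta> (\<phi> g c) (\<phi> h c) + 2)"
    using orbit_points_reverse_bound[OF finite] by blast
  define eps where "eps = 2 * r + K * (2 * r + 2)"
  have eps: "0 \<le> eps"
    using K(1) radius_nonneg by (simp add: eps_def)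
  have "d y x \<le> ennreal (1 + K) * d x y + ennreal eps" if x: "x \<in> X" and y: "y \<in> X" for x y
  proof -
    obtain g where g: "g \<in> carrier G" "\<delta> x (\<phi> g c) \<le> r" "\<delta> (\<phi> g c) x \<le> r"
      using near_orbit_point_\<delta>[OF x] by blast
    obtain h where h: "h \<in> carrier G" "\<delta> y (\<phi> h c) \<le> r" "\<delta> (\<phi> h c) y \<le> r"
      using near_orbit_point_\<delta>[OF y] by blast
    note points = x y orbit_point_closed[OF g(1)] orbit_point_closed[OF h(1)]
    have "\<delta> (\<phi> g c) (\<phi> h c) \<le> \<delta> (\<phi> g c) x + \<delta> x y + \<delta> y (\<phi> h c)"
      using \<delta>_triangle[of "\<phi> g c" x "\<phi> h c"] \<delta>_triangle[of x y "\<phi> h c"] points by simp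
    then have "\<delta> (\<phi> g c) (\<phi> h c) + 2 \<le> 2 * r + \<delta> x y + 2"
      using g h by simp
    then have "\<delta> (\<phi> h c) (\<phi> g c) \<le> K * (2 * r + \<delta> x y + 2)"
      using K(2)[OF g(1) h(1)] mult_left_mono[OF _ K(1)] by (meson order_trans)
    moreover have "\<delta> y x \<le> \<delta> y (\<phi> h c) + \<delta> (\<phi> h c) (\<phi> g c) + \<delta> (\<phi> g c) x"
      using \<delta>_triangle[of y "\<phi> h c" x] \<delta>_triangle[of "\<phi> h c" "\<phi> g c" x] points by simp
    moreover have "2 * r + K * (2 * r + \<delta> x y + 2) = K * \<delta> x y + eps"
      by (simp add: eps_def algebra_simps)
    ultimately have "\<delta> y x \<le> (1 + K) * \<delta> x y + eps"
      using g h \<delta>_nonneg[of x y] by (simp add: algebra_simps)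
    then show ?thesis
      using ennreal_le_affine[of "1 + K" "\<delta> x y" eps "\<delta> y x"] K(1) eps \<delta>_nonneg d_eq_\<delta> x y
      by simp
  qed
  then show ?thesis
    using K(1) eps by (intro exI[of _ "1 + K"] exI[of _ eps]) auto
qed

lemma strongly_connected: "strongly_connected X d"
  unfolding strongly_connected_def is_basepoint_def using d_finite by blast

lemma quasi_metric: "finite short_elements \<Longrightarrow> quasi_metric X d"
  unfolding quasi_metric_def using semimetric strongly_connected reverse_distance_bound by blast

end

theorem theorem3p5:
  fixes G :: "('g, 'm) monoid_scheme" and X :: "'a set"
    and d :: "'a \<Rightarrow> 'a \<Rightarrow> ennreal" and \<phi> :: "'g \<Rightarrow> 'a \<Rightarrow> 'a"
  assumes "group G"
    and "semimetric X d"
    and "geodesic_semimetric X d"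
    and "has_basepoint X d"
    and "isometric_action G X d \<phi>"
    and "cocompact_action G X d \<phi>"
    and "outward_proper G X d \<phi> \<or> inward_proper G X d \<phi>"
  shows "(\<exists>S. finite S \<and> generates_monoid G S)
       \<and> (\<forall>S. finite S \<and> generates_monoid G S \<longrightarrow>
              quasi_isometric (carrier G) (word_metric G S) X d)
       \<and> quasi_metric X d"
proof -
  obtain c r where "c \<in> X" "0 \<le> r" "X = (\<Union>g\<in>carrier G. \<phi> g ` strong_ball X d r c)"
    using assms(6) unfolding cocompact_action_def by blast
  then interpret cocompact_geodesic_action G X \<phi> d c r
    using assms(2-5) unfolding isometric_action_def
    by (intro cocompact_geodesic_action.intro cocompact_geodesic_action_axioms.intro) auto
  have "finite short_elements"
    using short_elements_finite assms(7) .
  then show ?thesis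
    using short_elements_generate orbit_map_quasi_isometric quasi_metric by blast
qed

end
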